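(* Let $A$ be a dilation, $X$ a ball quasi-Banach function space, $q\in[1,\infty)$, $d\in\mathbb Z_+$ and $s\in(0,\infty)$. For $f\in L^q_{\mathrm{loc}}(\mathbb R^n)$ define $$\widetilde{\|f\|}_{\mathcal L^A_{X,q,d,s}(\mathbb R^n)}:=\sup\left\|\left\{\sum_{i\in\mathbb N}\left[\frac{\lambda_i}{\|\mathbf 1_{B^{(i)}}\|_X}\right]^s\mathbf 1_{B^{(i)}}\right\}^{1/s}\right\|_X^{-1}\sum_{j\in\mathbb N}\frac{\lambda_j|B^{(j)}|}{\|\mathbf 1_{B^{(j)}}\|_X}\left[\frac1{|B^{(j)}|}\int_{B^{(j)}}\left|f(x)-P^d_{B^{(j)}}f(x)\right|^q\,dx\right]^{1/q},$$ where the supremum is taken over all sequences $\{B^{(j)}\}_{j\in\mathbb N}\subset\mathcal B$ and $\{\lambda_j\}_{j\in\mathbb N}\subset[0,\infty)$ such that $\left\|\left\{\sum_{j\in\mathbb N}\left[\frac{\lambda_j}{\|\mathbf 1_{B^{(j)}}\|_X}\right]^s\mathbf 1_{B^{(j)}}\right\}^{1/s}\right\|_X\in(0,\infty)$. Then, for every $f\in L^q_{\mathrm{loc}}(\mathbb R^n)$, $\widetilde{\|f\|}_{\mathcal L^A_{X,q,d,s}(\mathbb R^n)}=\|f\|_{\mathcal L^A_{X,q,d,s}(\mathbb R^n)}$.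
   Context: A real $n\times n$ matrix $A$ is a dilation if all its eigenvalues have modulus $>1$. Let $b:=|\det A|$. Fix an open ellipsoid $\Delta$ symmetric about the origin with $|\Delta|=1$ and $r>1$ with $\Delta\subset r\Delta\subset A\Delta$; put $B_k:=A^k\Delta$ ($k\in\mathbb Z$), so $|B_k|=b^k$, and $\mathcal B:=\{x+B_k:x\in\mathbb R^n,k\in\mathbb Z\}$ (dilated balls). Let $\mathscr M(\mathbb R^n)$ be the set of measurable functions on $\mathbb R^n$. A quasi-normed linear space $X\subset\mathscr M(\mathbb R^n)$ whose quasi-norm $\|\cdot\|_X$ is defined on all of $\mathscr M(\mathbb R^n)$ (possibly infinite) is a ball quasi-Banach function space if: (i) $\|f\|_X=0$ implies $f=0$ a.e.; (ii) $|g|\le|f|$ a.e. implies $\|g\|_X\le\|f\|_X$; (iii) $0\le f_m\uparrow f$ a.e. implies $\|f_m\|_X\uparrow\|f\|_X$; (iv) $\mathbf 1_B\in X$ for all $B\in\mathcal B$. $\mathcal P_d(\mathbb R^n)$ denotes polynomials of degree at most $d$; for $B\in\mathcal B$ and locally integrable $g$, $P^d_Bg$ is the unique $P\in\mathcal P_d(\mathbb R^n)$ with $\int_B(g-P)h\,dx=0$ for all $h\in\mathcal P_d(\mathbb R^n)$. The anisotropic ball Campanato-type space $\mathcal L^A_{X,q,d,s}(\mathbb R^n)$ is the set of $f\in L^q_{\mathrm{loc}}(\mathbb R^n)$ with $$\|f\|_{\mathcal L^A_{X,q,d,s}(\mathbb R^n)}:=\sup\left\|\left\{\sum_{i=1}^m\left[\frac{\lambda_i}{\|\mathbf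 1_{B^{(i)}}\|_X}\right]^s\mathbf 1_{B^{(i)}}\right\}^{1/s}\right\|_X^{-1}\sum_{j=1}^m\frac{\lambda_j|B^{(j)}|}{\|\mathbf 1_{B^{(j)}}\|_X}\left[\frac1{|B^{(j)}|}\int_{B^{(j)}}\left|f(x)-P^d_{B^{(j)}}f(x)\right|^q\,dx\right]^{1/q}<\infty,$$ the supremum over all $m\in\mathbb N$, $\{B^{(j)}\}_{j=1}^m\subset\mathcal B$ and $\{\lambda_j\}_{j=1}^m\subset[0,\infty)$ with $\sum_{j=1}^m\lambda_j\ne0$. *)

theory Defs
  imports "HOL-Analysis.Analysis"
begin

definition cmatrix :: "real^'n^'n \<Rightarrow> complex^'n^'n" where
  "cmatrix A = (\<chi> i j. complex_of_real (A $ i $ j))"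

definition dilation :: "real^'n^'n \<Rightarrow> bool" where
  "dilation A \<longleftrightarrow> (\<forall>z::complex. det (mat z - cmatrix A) = 0 \<longrightarrow> 1 < cmod z)"

definition ellipsoid0 :: "(real^'n) set \<Rightarrow> bool" where
  "ellipsoid0 D \<longleftrightarrow> (\<exists>P::real^'n^'n. invertible P \<and> D = (\<lambda>x. P *v x) ` ball 0 1)"

definition admissible_data :: "real^'n^'n \<Rightarrow> (real^'n) set \<Rightarrow> real \<Rightarrow> bool" where
  "admissible_data A D r \<longleftrightarrow> dilation A \<and> ellipsoid0 D \<and> measure lebesgue D = 1 \<and> 1 < r
     \<and> D \<subseteq> (\<lambda>x. r *\<^sub>R x) ` D \<and> (\<lambda>x. r *\<^sub>R x) ` D \<subseteq> (\<lambda>x. A *v x) ` D"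

definition dball :: "real^'n^'n \<Rightarrow> (real^'n) set \<Rightarrow> int \<Rightarrow> (real^'n) set" where
  "dball A D k = (if 0 \<le> k then ((\<lambda>x. A *v x) ^^ nat k) ` D
                  else ((\<lambda>x. matrix_inv A *v x) ^^ nat (- k)) ` D)"

definition dballs :: "real^'n^'n \<Rightarrow> (real^'n) set \<Rightarrow> (real^'n) set set" where
  "dballs A D = {(\<lambda>y. x + y) ` dball A D k | x k. True}"

text \<open>The quasi-norm is a functional Xn on measurable real functions with values in [0,\<infinity>];
  the space X is the set of measurable f with Xn f < \<infinity>.\<close>
definition ball_qBfs :: "real^'n^'n \<Rightarrow> (real^'n) set \<Rightarrow> ((real^'n \<Rightarrow> real) \<Rightarrow> ennreal) \<Rightarrow> bool" where
  "ball_qBfs A D Xn \<longleftrightarrow>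
     \<comment> \<open>quasi-norm\<close>
     (\<exists>K::real. 1 \<le> K \<and> (\<forall>f g. f \<in> borel_measurable lebesgue \<longrightarrow> g \<in> borel_measurable lebesgue \<longrightarrow>
          Xn (\<lambda>x. f x + g x) \<le> ennreal K * (Xn f + Xn g)))
   \<and> (\<forall>f c. f \<in> borel_measurable lebesgue \<longrightarrow> Xn (\<lambda>x. c * f x) = ennreal \<bar>c\<bar> * Xn f)
   \<comment> \<open>(i)\<close>
   \<and> (\<forall>f. f \<in> borel_measurable lebesgue \<longrightarrow> Xn f = 0 \<longrightarrow> (AE x in lebesgue. f x = 0))
   \<comment> \<open>(ii)\<close>
   \<and> (\<forall>f g. f \<in> borel_measurable lebesgue \<longrightarrow> g \<in> borel_measurable lebesgue \<longrightarrow>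
          (AE x in lebesgue. \<bar>g x\<bar> \<le> \<bar>f x\<bar>) \<longrightarrow> Xn g \<le> Xn f)
   \<comment> \<open>(iii)\<close>
   \<and> (\<forall>F f. (\<forall>m. F m \<in> borel_measurable lebesgue) \<longrightarrow> f \<in> borel_measurable lebesgue \<longrightarrow>
          (AE x in lebesgue. (\<forall>m. 0 \<le> F m x) \<and> incseq (\<lambda>m. F m x) \<and> (\<lambda>m. F m x) \<longlonglongrightarrow> f x) \<longrightarrow>
          incseq (\<lambda>m. Xn (F m)) \<and> (\<lambda>m. Xn (F m)) \<longlonglongrightarrow> Xn f)
   \<comment> \<open>(iv)\<close>
   \<and> (\<forall>B \<in> dballs A D. Xn (indicator B) < \<infinity>)"

definition mono_exps :: "nat \<Rightarrow> ('n::finite \<Rightarrow> nat) set" where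
  "mono_exps d = {\<alpha>. (\<Sum>i\<in>UNIV. \<alpha> i) \<le> d}"

definition poly_fun :: "nat \<Rightarrow> (real^'n \<Rightarrow> real) \<Rightarrow> bool" where
  "poly_fun d p \<longleftrightarrow> (\<exists>c::('n \<Rightarrow> nat) \<Rightarrow> real.
      p = (\<lambda>x. \<Sum>\<alpha>\<in>mono_exps d. c \<alpha> * (\<Prod>i\<in>UNIV. (x $ i) ^ \<alpha> i)))"

definition PB :: "nat \<Rightarrow> (real^'n) set \<Rightarrow> (real^'n \<Rightarrow> real) \<Rightarrow> (real^'n \<Rightarrow> real)" where
  "PB d B g = (THE P. poly_fun d P \<and>
      (\<forall>h. poly_fun d h \<longrightarrow> (LINT x:B|lebesgue. (g x - P x) * h x) = 0))"

definition Lq_loc :: "real \<Rightarrow> (real^'n \<Rightarrow> real) set" where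
  "Lq_loc q = {f. f \<in> borel_measurable lebesgue \<and>
      (\<forall>K. compact K \<longrightarrow> set_integrable lebesgue K (\<lambda>x. \<bar>f x\<bar> powr q))}"

definition osc :: "nat \<Rightarrow> real \<Rightarrow> (real^'n \<Rightarrow> real) \<Rightarrow> (real^'n) set \<Rightarrow> real" where
  "osc d q f B = ((1 / measure lebesgue B) *
       (LINT x:B|lebesgue. \<bar>f x - PB d B f x\<bar> powr q)) powr (1 / q)"

text \<open>\<open>nX Xn B\<close> = norm of the indicator of B in X (finite by (iv)).\<close>
definition nX :: "((real^'n \<Rightarrow> real) \<Rightarrow> ennreal) \<Rightarrow> (real^'n) set \<Rightarrow> real" where
  "nX Xn B = enn2real (Xn (indicator B))"

definition ssum :: "((real^'n \<Rightarrow> real) \<Rightarrow> ennreal) \<Rightarrow> real \<Rightarrow> (nat \<Rightarrow> (real^'n) set)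
     \<Rightarrow> (nat \<Rightarrow> real) \<Rightarrow> nat \<Rightarrow> real^'n \<Rightarrow> real" where
  "ssum Xn s B lam m x = (\<Sum>i<m. (lam i / nX Xn (B i)) powr s * indicator (B i) x) powr (1 / s)"

definition cterm :: "((real^'n \<Rightarrow> real) \<Rightarrow> ennreal) \<Rightarrow> nat \<Rightarrow> real \<Rightarrow> (real^'n \<Rightarrow> real)
     \<Rightarrow> (nat \<Rightarrow> (real^'n) set) \<Rightarrow> (nat \<Rightarrow> real) \<Rightarrow> nat \<Rightarrow> real" where
  "cterm Xn d q f B lam j = lam j * measure lebesgue (B j) / nX Xn (B j) * osc d q f (B j)"

text \<open>The Campanato-type (quasi-)norm with finite families (m members, indices 0..m-1).\<close>
definition campanato_norm :: "real^'n^'n \<Rightarrow> (real^'n) set \<Rightarrow> ((real^'n \<Rightarrow> real) \<Rightarrow> ennreal)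
     \<Rightarrow> real \<Rightarrow> nat \<Rightarrow> real \<Rightarrow> (real^'n \<Rightarrow> real) \<Rightarrow> ennreal" where
  "campanato_norm A D Xn q d s f =
     (SUP (m, B, lam) \<in> {(m, B, lam). (\<forall>j<m. B j \<in> dballs A D \<and> 0 \<le> lam j) \<and> (\<Sum>j<m. lam j) \<noteq> 0}.
        inverse (Xn (ssum Xn s B lam m)) * ennreal (\<Sum>j<m. cterm Xn d q f B lam j))"

text \<open>X-norm of the infinite s-sum: via (iii), the supremum of the X-norms of the increasing
  partial s-sums (this also covers the case where the pointwise series diverges).\<close>
definition ssum_inf_norm :: "((real^'n \<Rightarrow> real) \<Rightarrow> ennreal) \<Rightarrow> real \<Rightarrow> (nat \<Rightarrow> (real^'n) set)
     \<Rightarrow> (nat \<Rightarrow> real) \<Rightarrow> ennreal" where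
  "ssum_inf_norm Xn s B lam = (SUP m. Xn (ssum Xn s B lam m))"

definition campanato_norm_seq :: "real^'n^'n \<Rightarrow> (real^'n) set \<Rightarrow> ((real^'n \<Rightarrow> real) \<Rightarrow> ennreal)
     \<Rightarrow> real \<Rightarrow> nat \<Rightarrow> real \<Rightarrow> (real^'n \<Rightarrow> real) \<Rightarrow> ennreal" where
  "campanato_norm_seq A D Xn q d s f =
     (SUP (B, lam) \<in> {(B, lam). (\<forall>j. B j \<in> dballs A D \<and> 0 \<le> lam j)
                         \<and> 0 < ssum_inf_norm Xn s B lam \<and> ssum_inf_norm Xn s B lam < \<infinity>}.
        inverse (ssum_inf_norm Xn s B lam) * (\<Sum>j. ennreal (cterm Xn d q f B lam j)))"

end

theory Submission
  imports Defs
begin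

text \<open>A finite family of balls \<open>B j\<close> and coefficients \<open>lam j\<close>, \<open>j < m\<close>, becomes a sequence
  once it is padded with zero coefficients. By monotonicity (ii) the padded s-sum has the same
  X-norm as the finite one, and that norm is positive whenever the Campanato sum is nonzero: the
  s-sum is bounded below on some \<open>B j\<close> with \<open>lam j > 0\<close>, so (i) and (ii) would otherwise force
  \<open>\<parallel>\<one>\<^bsub>B j\<^esub>\<parallel>\<^sub>X = 0\<close>. Conversely, the Campanato sum of a sequence is the supremum of its
  partial sums, and the X-norm of each partial s-sum is at most that of the whole s-sum, so every
  partial quotient is dominated by the supremum over finite families.\<close>

lemma ennreal_inverse_antimono:
  fixes a b :: ennreal
  shows "a \<le> b \<Longrightarrow> inverse b \<le> inverse a"
  using ereal_inverse_antimono[of "enn2ereal a" "enn2ereal b"]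
  by (simp add: less_eq_ennreal.rep_eq inverse_ennreal.rep_eq)

lemma linear_funpow:
  fixes f :: "'a::real_vector \<Rightarrow> 'a"
  assumes "linear f"
  shows "linear (f ^^ k)"
proof (induction k)
  case 0
  show ?case using linear_id by (simp add: id_def)
next
  case (Suc k)
  then show ?case using linear_compose[OF Suc assms] by (simp add: o_def)
qed

lemma dball_linear_image:
  obtains L where "linear L" "dball A D k = L ` D"
  using that[OF linear_funpow[OF matrix_vector_mul_linear]]
  by (cases "0 \<le> k") (simp_all add: dball_def)

lemma dballs_sets_lebesgue:
  fixes A :: "real^'n^'n" and D :: "(real^'n) set"
  assumes "ellipsoid0 D" "B \<in> dballs A D"
  shows "B \<in> sets lebesgue"
proof -
  obtain P :: "real^'n^'n" where D: "D = (\<lambda>x. P *v x) ` ball 0 1"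
    using assms(1) unfolding ellipsoid0_def by blast
  obtain x k where B: "B = (\<lambda>y. x + y) ` dball A D k"
    using assms(2) unfolding dballs_def by blast
  obtain L where L: "linear L" "dball A D k = L ` D"
    by (rule dball_linear_image)
  have "B = (\<lambda>y. x + L (P *v y)) ` ball 0 1"
    unfolding B L(2) by (simp add: D image_image)
  moreover have "(\<lambda>y. x + L (P *v y)) differentiable_on ball 0 1"
    using linear_compose[OF matrix_vector_mul_linear L(1)]
    by (intro differentiable_on_add differentiable_on_const linear_imp_differentiable_on)
       (simp add: o_def)
  ultimately show ?thesis
    by (simp add: differentiable_image_in_sets_lebesgue)
qed

lemma ball_qBfs_mono:
  assumes "ball_qBfs A D Xn" "f \<in> borel_measurable lebesgue" "g \<in> borel_measurable lebesgue"
    and "AE x in lebesgue. \<bar>g x\<bar> \<le> \<bar>f x\<bar>"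
  shows "Xn g \<le> Xn f"
  using assms unfolding ball_qBfs_def by blast

lemma ball_qBfs_AE_zero:
  assumes "ball_qBfs A D Xn" "f \<in> borel_measurable lebesgue" "Xn f = 0"
  shows "AE x in lebesgue. f x = 0"
  using assms unfolding ball_qBfs_def by blast

lemma nX_nonneg: "0 \<le> nX Xn B"
  unfolding nX_def by simp

lemma ssum_nonneg: "0 \<le> ssum Xn s B lam m x"
  unfolding ssum_def by simp

lemma ssum_measurable:
  assumes "\<And>i. i < m \<Longrightarrow> B i \<in> sets lebesgue"
  shows "ssum Xn s B lam m \<in> borel_measurable lebesgue"
  unfolding ssum_def using assms
  by (intro powr_real_measurable borel_measurable_sum borel_measurable_times
      borel_measurable_indicator) auto

lemma ssum_mono:
  assumes "0 < s" "k \<le> m"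
  shows "ssum Xn s B lam k x \<le> ssum Xn s B lam m x"
  unfolding ssum_def using assms
  by (intro powr_mono2 sum_nonneg sum_mono2) auto

lemma ssum_ge_coefficient:
  assumes "0 < s" "j < m" "x \<in> B j" "0 \<le> lam j"
  shows "lam j / nX Xn (B j) \<le> ssum Xn s B lam m x"
proof -
  have "lam j / nX Xn (B j) = ((lam j / nX Xn (B j)) powr s * indicator (B j) x) powr (1 / s)"
    using assms nX_nonneg[of Xn "B j"] by (simp add: powr_powr)
  also have "\<dots> \<le> ssum Xn s B lam m x"
    unfolding ssum_def using assms
    by (intro powr_mono2 member_le_sum[where f = "\<lambda>i. (lam i / nX Xn (B i)) powr s * indicator (B i) x"])
       auto
  finally show ?thesis .
qed

lemma Xn_ssum_mono:
  assumes "ball_qBfs A D Xn" "0 < s" "k \<le> m" "\<And>i. i < m \<Longrightarrow> B i \<in> sets lebesgue"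
  shows "Xn (ssum Xn s B lam k) \<le> Xn (ssum Xn s B lam m)"
  using assms ssum_mono[OF assms(2,3)]
  by (intro ball_qBfs_mono[OF assms(1)] ssum_measurable AE_I2) (auto simp: ssum_nonneg)

lemma Xn_ssum_pos:
  assumes "ball_qBfs A D Xn" "0 < s" "\<And>i. i < m \<Longrightarrow> B i \<in> sets lebesgue"
    and "j < m" "0 < lam j" "0 < nX Xn (B j)"
  shows "0 < Xn (ssum Xn s B lam m)"
proof (rule ccontr)
  have ssum_pos_on_ball: "ssum Xn s B lam m x \<noteq> 0" if "x \<in> B j" for x
    using ssum_ge_coefficient[where B = B and lam = lam and Xn = Xn, OF assms(2,4) that]
      divide_pos_pos[OF assms(5,6)] assms(5)
    by linarith
  assume "\<not> 0 < Xn (ssum Xn s B lam m)"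
  then have zero: "Xn (ssum Xn s B lam m) = 0"
    by simp
  then have "AE x in lebesgue. ssum Xn s B lam m x = 0"
    using assms(1,3) by (intro ball_qBfs_AE_zero ssum_measurable)
  then have "AE x in lebesgue. \<bar>indicator (B j) x :: real\<bar> \<le> \<bar>ssum Xn s B lam m x\<bar>"
    by eventually_elim (auto simp: indicator_def dest: ssum_pos_on_ball)
  then have "Xn (indicator (B j)) \<le> Xn (ssum Xn s B lam m)"
    by (intro ball_qBfs_mono[OF assms(1)] ssum_measurable borel_measurable_indicator assms(3,4))
  then have "Xn (indicator (B j)) = 0"
    using zero by simp
  then show False
    using assms(6) by (simp add: nX_def)
qed

definition pad :: "nat \<Rightarrow> 'a \<Rightarrow> (nat \<Rightarrow> 'a) \<Rightarrow> nat \<Rightarrow> 'a" where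
  "pad m c u i = (if i < m then u i else c)"

lemma ssum_pad:
  "ssum Xn s (pad m b B) (pad m 0 lam) k = ssum Xn s B lam (min k m)"
proof -
  have "(\<Sum>i<k. (pad m 0 lam i / nX Xn (pad m b B i)) powr s * indicator (pad m b B i) x)
      = (\<Sum>i<min k m. (lam i / nX Xn (B i)) powr s * indicator (B i) x)" for x
    by (rule sum.mono_neutral_cong_right) (auto simp: pad_def)
  then show ?thesis
    unfolding ssum_def by simp
qed

lemma ssum_inf_norm_pad:
  assumes "ball_qBfs A D Xn" "0 < s" "\<And>i. i < m \<Longrightarrow> B i \<in> sets lebesgue"
  shows "ssum_inf_norm Xn s (pad m b B) (pad m 0 lam) = Xn (ssum Xn s B lam m)"
proof (rule antisym)
  show "ssum_inf_norm Xn s (pad m b B) (pad m 0 lam) \<le> Xn (ssum Xn s B lam m)"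
    unfolding ssum_inf_norm_def ssum_pad
    using assms by (intro SUP_least Xn_ssum_mono) auto
  show "Xn (ssum Xn s B lam m) \<le> ssum_inf_norm Xn s (pad m b B) (pad m 0 lam)"
    unfolding ssum_inf_norm_def using ssum_pad[of Xn s m b B lam m]
    by (metis SUP_upper UNIV_I min.idem)
qed

lemma cterm_nonneg: "0 \<le> lam j \<Longrightarrow> 0 \<le> cterm Xn d q f B lam j"
  unfolding cterm_def nX_def osc_def by simp

lemma sum_ennreal_cterm:
  assumes "\<And>j. j < m \<Longrightarrow> 0 \<le> lam j"
  shows "(\<Sum>j<m. ennreal (cterm Xn d q f B lam j)) = ennreal (\<Sum>j<m. cterm Xn d q f B lam j)"
  using assms by (intro sum_ennreal) (simp add: cterm_nonneg)

lemma suminf_cterm_pad: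
  assumes "\<And>j. j < m \<Longrightarrow> 0 \<le> lam j"
  shows "(\<Sum>i. ennreal (cterm Xn d q f (pad m b B) (pad m 0 lam) i))
       = ennreal (\<Sum>j<m. cterm Xn d q f B lam j)"
proof -
  have "(\<Sum>i. ennreal (cterm Xn d q f (pad m b B) (pad m 0 lam) i))
      = (\<Sum>i<m. ennreal (cterm Xn d q f (pad m b B) (pad m 0 lam) i))"
    by (rule suminf_finite) (auto simp: cterm_def pad_def)
  also have "\<dots> = (\<Sum>j<m. ennreal (cterm Xn d q f B lam j))"
    by (intro sum.cong) (auto simp: pad_def cterm_def)
  finally show ?thesis
    using sum_ennreal_cterm[OF assms] by simp
qed

lemma campanato_norm_ge:
  assumes "\<And>j. j < m \<Longrightarrow> B j \<in> dballs A D \<and> 0 \<le> lam j"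
    and "Xn (ssum Xn s B lam m) \<le> N"
  shows "inverse N * ennreal (\<Sum>j<m. cterm Xn d q f B lam j) \<le> campanato_norm A D Xn q d s f"
proof (cases "(\<Sum>j<m. lam j) = 0")
  case True
  then have "\<forall>j<m. lam j = 0"
    using assms(1) sum_nonneg_eq_0_iff[of "{..<m}" lam] by auto
  then show ?thesis
    by (simp add: cterm_def)
next
  case False
  have "inverse N * ennreal (\<Sum>j<m. cterm Xn d q f B lam j)
      \<le> inverse (Xn (ssum Xn s B lam m)) * ennreal (\<Sum>j<m. cterm Xn d q f B lam j)"
    using assms(2) by (intro mult_right_mono ennreal_inverse_antimono) auto
  also have "\<dots> \<le> campanato_norm A D Xn q d s f"
    unfolding campanato_norm_def using assms(1) False
    by (intro SUP_upper2[where i = "(m, B, lam)"]) auto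
  finally show ?thesis .
qed

lemma campanato_norm_seq_le_campanato_norm:
  fixes A :: "real^'n^'n"
  shows "campanato_norm_seq A D Xn q d s f \<le> campanato_norm A D Xn q d s f"
  unfolding campanato_norm_seq_def
proof (intro SUP_least, clarify)
  fix B :: "nat \<Rightarrow> (real^'n) set" and lam :: "nat \<Rightarrow> real"
  assume seq: "\<forall>j. B j \<in> dballs A D \<and> 0 \<le> lam j"
  have "inverse (ssum_inf_norm Xn s B lam) * (\<Sum>j. ennreal (cterm Xn d q f B lam j))
      = (SUP m. inverse (ssum_inf_norm Xn s B lam) * ennreal (\<Sum>j<m. cterm Xn d q f B lam j))"
    using seq by (simp add: suminf_eq_SUP SUP_mult_left_ennreal sum_ennreal_cterm)
  also have "\<dots> \<le> campanato_norm A D Xn q d s f"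
    using seq unfolding ssum_inf_norm_def
    by (intro SUP_least campanato_norm_ge SUP_upper) auto
  finally show "inverse (ssum_inf_norm Xn s B lam) * (\<Sum>j. ennreal (cterm Xn d q f B lam j))
      \<le> campanato_norm A D Xn q d s f" .
qed

lemma campanato_norm_seq_ge_pad:
  fixes A :: "real^'n^'n" and D :: "(real^'n) set"
  assumes "ellipsoid0 D" "ball_qBfs A D Xn" "0 < s"
    and fam: "\<And>j. j < m \<Longrightarrow> B j \<in> dballs A D \<and> 0 \<le> lam j" "0 < m"
    and "0 < Xn (ssum Xn s B lam m)" "Xn (ssum Xn s B lam m) < \<infinity>"
  shows "inverse (Xn (ssum Xn s B lam m)) * ennreal (\<Sum>j<m. cterm Xn d q f B lam j)
    \<le> campanato_norm_seq A D Xn q d s f"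
proof -
  let ?B = "pad m (B 0) B" and ?lam = "pad m 0 lam"
  have norm: "ssum_inf_norm Xn s ?B ?lam = Xn (ssum Xn s B lam m)"
    using fam dballs_sets_lebesgue[OF assms(1)] by (intro ssum_inf_norm_pad[OF assms(2,3)]) blast
  have "\<forall>j. ?B j \<in> dballs A D \<and> 0 \<le> ?lam j"
    using fam by (simp add: pad_def)
  then show ?thesis
    unfolding campanato_norm_seq_def using assms(6,7) fam(1)
    by (intro SUP_upper2[where i = "(?B, ?lam)"]) (auto simp: norm suminf_cterm_pad)
qed

lemma campanato_norm_le_campanato_norm_seq:
  fixes A :: "real^'n^'n" and D :: "(real^'n) set"
  assumes "ellipsoid0 D" "ball_qBfs A D Xn" "0 < s"
  shows "campanato_norm A D Xn q d s f \<le> campanato_norm_seq A D Xn q d s f"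
  unfolding campanato_norm_def
proof (intro SUP_least, clarify)
  fix m and B :: "nat \<Rightarrow> (real^'n) set" and lam :: "nat \<Rightarrow> real"
  assume fam: "\<forall>j<m. B j \<in> dballs A D \<and> 0 \<le> lam j"
  define M where "M = Xn (ssum Xn s B lam m)"
  define C where "C = (\<Sum>j<m. cterm Xn d q f B lam j)"
  show "inverse M * ennreal C \<le> campanato_norm_seq A D Xn q d s f"
  proof (cases "M = \<infinity> \<or> C = 0")
    case True
    then show ?thesis by auto
  next
    case False
    then obtain j where j: "j < m" "cterm Xn d q f B lam j \<noteq> 0"
      unfolding C_def by (meson sum.not_neutral_contains_not_neutral lessThan_iff)
    then have "0 < lam j" "0 < nX Xn (B j)"
      using fam nX_nonneg[of Xn "B j"] by (auto simp: cterm_def order_le_less)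
    then have "0 < M"
      unfolding M_def using fam j(1) dballs_sets_lebesgue[OF assms(1)]
      by (intro Xn_ssum_pos[OF assms(2,3)]) blast+
    then show ?thesis
      unfolding M_def C_def using False fam j(1)
      by (intro campanato_norm_seq_ge_pad[OF assms]) (auto simp: M_def top.not_eq_extremum)
  qed
qed

theorem proposition3p5:
  fixes A :: "real^'n^'n" and D :: "(real^'n) set" and r :: real
    and Xn :: "(real^'n \<Rightarrow> real) \<Rightarrow> ennreal"
    and q :: real and d :: nat and s :: real and f :: "real^'n \<Rightarrow> real"
  assumes "admissible_data A D r"
    and "ball_qBfs A D Xn"
    and "1 \<le> q" and "0 < s"
    and "f \<in> Lq_loc q"
  shows "campanato_norm_seq A D Xn q d s f = campanato_norm A D Xn q d s f"
proof (rule antisym)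
  show "campanato_norm_seq A D Xn q d s f \<le> campanato_norm A D Xn q d s f"
    by (rule campanato_norm_seq_le_campanato_norm)
  have "ellipsoid0 D"
    using assms(1) unfolding admissible_data_def by blast
  then show "campanato_norm A D Xn q d s f \<le> campanato_norm_seq A D Xn q d s f"
    using assms(2,4) by (rule campanato_norm_le_campanato_norm_seq)
qed

end
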